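(* Let $(\mathcal{X},d)$ be a metric space, let $M>0$ be an integer, and let $x_o, x_1, \ldots, x_M, x_1', \ldots, x_M'$ be an $M$-configuration in $(\mathcal{X},d)$. Let $1 \le j \le M$ be any index and let $S \subset \{1,\ldots,M\}$ be any subset with $|S|>1$. Then the set $A = \{x_o, x_j'\} \cup \{x_i : i \in S\}$ has a nice $2$-clustering if and only if $j \notin S$.
   Context: A clustering of a set $A$ (with distance $d$) is a set of nonempty, pairwise disjoint subsets (clusters) whose union is $A$; a $k$-clustering is a clustering with exactly $k$ clusters. Write $x \sim_{\mathcal C} y$ if $x,y$ lie in the same cluster of $\mathcal C$, and $x \not\sim_{\mathcal C} y$ otherwise. A clustering $\mathcal C$ of $(A,d)$ is nice if for all $x,y,z\in A$: $d(y,x)<d(z,x)$ whenever $x\sim_{\mathcal C} y$ and $x\not\sim_{\mathcal C} z$. For an integer $M>0$, an $M$-configuration in a metric space $(\mathcal X,d)$ is a collection of $2M+1$ points $x_o, x_1,\ldots,x_M, x_1',\ldots,x_M'\in\mathcal X$ such that: (i) all pairwise distances among these points lie in $[1,2]$; (ii) $d(x_o,x_i)\in(3/2,2]$ and $d(x_o,x_i')\in(3/2,2]$ for all $i\ge 1$; (iii) $d(x_i,x_j), d(x_i',x_j'), d(x_i,x_j')\in[1,3/2]$ for all $i\neq j$, $i,j\ge1$; (iv) $d(x_i,x_i')>d(x_o,x_i)$ for all $i\ge 1$. *)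

theory Defs
  imports "HOL-Analysis.Analysis"
begin

definition clustering :: "'a set set \<Rightarrow> 'a set \<Rightarrow> bool" where
  "clustering C A \<longleftrightarrow>
     (\<forall>c\<in>C. c \<noteq> {}) \<and>
     (\<forall>c1\<in>C. \<forall>c2\<in>C. c1 \<noteq> c2 \<longrightarrow> c1 \<inter> c2 = {}) \<and>
     \<Union>C = A"

definition k_clustering :: "nat \<Rightarrow> 'a set set \<Rightarrow> 'a set \<Rightarrow> bool" where
  "k_clustering k C A \<longleftrightarrow> clustering C A \<and> finite C \<and> card C = k"

definition same_cluster :: "'a set set \<Rightarrow> 'a \<Rightarrow> 'a \<Rightarrow> bool" where
  "same_cluster C x y \<longleftrightarrow> (\<exists>c\<in>C. x \<in> c \<and> y \<in> c)"

definition nice_clustering :: "('a \<Rightarrow> 'a \<Rightarrow> real) \<Rightarrow> 'a set set \<Rightarrow> 'a set \<Rightarrow> bool" where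
  "nice_clustering d C A \<longleftrightarrow> clustering C A \<and>
     (\<forall>x\<in>A. \<forall>y\<in>A. \<forall>z\<in>A.
        same_cluster C x y \<and> \<not> same_cluster C x z \<longrightarrow> d y x < d z x)"

text \<open>M-configuration: points xo, x 1..x M, x' 1..x' M (labels; values at other indices irrelevant).\<close>
definition M_configuration ::
  "nat \<Rightarrow> 'a::metric_space \<Rightarrow> (nat \<Rightarrow> 'a) \<Rightarrow> (nat \<Rightarrow> 'a) \<Rightarrow> bool" where
  "M_configuration M xo x x' \<longleftrightarrow>
     \<comment> \<open>(i) all pairwise distances (between distinct labels) lie in [1,2]\<close>
     (\<forall>i\<in>{1..M}. dist xo (x i) \<in> {1..2} \<and> dist xo (x' i) \<in> {1..2}) \<and>
     (\<forall>i\<in>{1..M}. \<forall>k\<in>{1..M}. i \<noteq> k \<longrightarrow>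
         dist (x i) (x k) \<in> {1..2} \<and> dist (x' i) (x' k) \<in> {1..2}) \<and>
     (\<forall>i\<in>{1..M}. \<forall>k\<in>{1..M}. dist (x i) (x' k) \<in> {1..2}) \<and>
     \<comment> \<open>(ii)\<close>
     (\<forall>i\<in>{1..M}. dist xo (x i) \<in> {3/2<..2} \<and> dist xo (x' i) \<in> {3/2<..2}) \<and>
     \<comment> \<open>(iii)\<close>
     (\<forall>i\<in>{1..M}. \<forall>k\<in>{1..M}. i \<noteq> k \<longrightarrow>
         dist (x i) (x k) \<in> {1..3/2} \<and> dist (x' i) (x' k) \<in> {1..3/2} \<and>
         dist (x i) (x' k) \<in> {1..3/2}) \<and>
     \<comment> \<open>(iv)\<close>
     (\<forall>i\<in>{1..M}. dist (x i) (x' i) > dist xo (x i))"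

end

theory Submission
  imports Defs
begin

(* In A = {xo, x' j} \<union> x ` S the centre xo is far (distance > 3/2) from every
   other point, while the remaining points are mutually close (distance \<le> 3/2), with the
   single exception of the pair x j, x' j when j \<in> S.
   - If j \<notin> S, splitting off the far point, {{xo}, A - {xo}}, is a nice 2-clustering.
   - If j \<in> S, pick k \<in> S - {j}; x k is close to every point other than xo.  The cluster of
     xo cannot be {xo} (x j would have to be closer to x' j than to xo, contradicting (iv)),
     and it cannot contain another point either (then x k, and then everything, is forced
     into it).
   The file first describes 2-clusterings as cuts by a proper subset, then proves the two
   abstract metric criteria above for arbitrary point sets in a metric space, then collects the
   distance facts of M-configurations, and finally combines them. *)

lemma cut_two_clustering:
  assumes "c0 \<noteq> {}" "c0 \<subseteq> A" "c0 \<noteq> A"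
  shows "k_clustering 2 {c0, A - c0} A"
    and "\<And>u v. u \<in> A \<Longrightarrow> v \<in> A \<Longrightarrow>
           same_cluster {c0, A - c0} u v \<longleftrightarrow> (u \<in> c0 \<longleftrightarrow> v \<in> c0)"
proof -
  have "c0 \<noteq> A - c0" using assms by blast
  then show "k_clustering 2 {c0, A - c0} A"
    unfolding k_clustering_def clustering_def using assms by auto
  show "same_cluster {c0, A - c0} u v \<longleftrightarrow> (u \<in> c0 \<longleftrightarrow> v \<in> c0)" if "u \<in> A" "v \<in> A" for u v
    using that unfolding same_cluster_def by auto
qed

lemma two_clustering_is_cut:
  assumes "k_clustering 2 C A" "q \<in> A"
  obtains c0 where "q \<in> c0" "c0 \<subseteq> A" "c0 \<noteq> A"
    and "\<forall>u\<in>A. \<forall>v\<in>A. same_cluster C u v \<longleftrightarrow> (u \<in> c0 \<longleftrightarrow> v \<in> c0)"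
proof -
  from assms(1) have cl: "clustering C A" and "card C = 2"
    unfolding k_clustering_def by auto
  then obtain c1 c2 where C: "C = {c1, c2}" "c1 \<noteq> c2"
    by (meson card_2_iff)
  with cl have ne: "c1 \<noteq> {}" "c2 \<noteq> {}" and dj: "c1 \<inter> c2 = {}" and un: "c1 \<union> c2 = A"
    unfolding clustering_def by auto
  consider "q \<in> c1" | "q \<in> c2" using un assms(2) by blast
  then show ?thesis
  proof cases
    case 1
    then show ?thesis using that[of c1] ne dj un C unfolding same_cluster_def by blast
  next
    case 2
    then show ?thesis using that[of c2] ne dj un C unfolding same_cluster_def by blast
  qed
qed

lemma isolated_point_nice_clustering:
  fixes z :: "'a::metric_space"
  assumes z: "z \<in> A" and nonsingleton: "A - {z} \<noteq> {}"
    and far: "\<forall>w\<in>A - {z}. r < dist z w"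
    and close: "\<forall>u\<in>A - {z}. \<forall>v\<in>A - {z}. dist u v \<le> r"
  shows "k_clustering 2 {{z}, A - {z}} A \<and> nice_clustering dist {{z}, A - {z}} A"
proof -
  have cut: "{z} \<noteq> {}" "{z} \<subseteq> A" "{z} \<noteq> A" using z nonsingleton by auto
  note C = cut_two_clustering[OF cut]
  have separated: "dist b a < dist c a"
    if abc: "a \<in> A" "b \<in> A" "c \<in> A" and ab: "a = z \<longleftrightarrow> b = z" and ac: "\<not> (a = z \<longleftrightarrow> c = z)"
    for a b c
  proof (cases "a = z")
    case True
    then show ?thesis using ab ac abc far by (auto simp: dist_commute)
  next
    case False
    then have "dist b a \<le> r" "r < dist c a"
      using ab ac abc far close by (auto simp: dist_commute)
    then show ?thesis by simp
  qed
  have "nice_clustering dist {{z}, A - {z}} A"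
    unfolding nice_clustering_def
  proof (intro conjI ballI impI)
    show "clustering {{z}, A - {z}} A" using C(1) unfolding k_clustering_def by simp
    show "dist b a < dist c a"
      if "a \<in> A" "b \<in> A" "c \<in> A"
        and "same_cluster {{z}, A - {z}} a b \<and> \<not> same_cluster {{z}, A - {z}} a c" for a b c
    proof -
      have "a = z \<longleftrightarrow> b = z" "\<not> (a = z \<longleftrightarrow> c = z)"
        using that C(2)[of a b] C(2)[of a c] by auto
      with separated that show ?thesis by blast
    qed
  qed
  with C(1) show ?thesis by blast
qed

lemma no_nice_two_clustering:
  fixes z :: "'a::metric_space"
  assumes z: "z \<in> A"
    and far: "\<forall>w\<in>A - {z}. r < dist z w"
    and hub: "p \<in> A - {z}" "\<forall>w\<in>A - {z}. dist w p \<le> r"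
    and pair: "a \<in> A - {z}" "b \<in> A - {z}" "dist z a \<le> dist b a"
  shows "\<not> (k_clustering 2 C A \<and> nice_clustering dist C A)"
proof
  assume "k_clustering 2 C A \<and> nice_clustering dist C A"
  then have two: "k_clustering 2 C A" and nice: "nice_clustering dist C A" by auto
  obtain c0 where c0: "z \<in> c0" "c0 \<subseteq> A" "c0 \<noteq> A"
    and same: "\<forall>u\<in>A. \<forall>v\<in>A. same_cluster C u v \<longleftrightarrow> (u \<in> c0 \<longleftrightarrow> v \<in> c0)"
    using two_clustering_is_cut[OF two z] by blast
  have nice_cut: "dist v u < dist w u"
    if "u \<in> A" "v \<in> A" "w \<in> A" "u \<in> c0 \<longleftrightarrow> v \<in> c0" "\<not> (u \<in> c0 \<longleftrightarrow> w \<in> c0)" for u v w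
    using nice same that unfolding nice_clustering_def by blast
  show False
  proof (cases "c0 = {z}")
    case True
    \<comment> \<open>a and b share a cluster not containing z, so a is closer to b than to z\<close>
    then have "dist b a < dist z a" using nice_cut[of a b z] pair z by auto
    then show False using pair(3) by simp
  next
    case False
    then obtain w where w: "w \<in> c0" "w \<in> A - {z}" using c0 by blast
    have "p \<in> c0"
    proof (rule ccontr)
      assume "p \<notin> c0"
      then have "dist z w < dist p w" using nice_cut[of w z p] w hub c0 by auto
      moreover have "dist p w \<le> r" using hub(2) w by (metis dist_commute)
      moreover have "r < dist z w" using far w(2) by blast
      ultimately show False by simp
    qed
    have "u \<in> c0" if u: "u \<in> A - {z}" for u
    proof (rule ccontr)
      assume "u \<notin> c0"
      then have "dist z p < dist u p" using nice_cut[of p z u] u hub \<open>p \<in> c0\<close> c0 by auto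
      moreover have "dist u p \<le> r" using hub(2) u by blast
      moreover have "r < dist z p" using far hub(1) by blast
      ultimately show False by simp
    qed
    then show False using c0 by blast
  qed
qed

context
  fixes M :: nat and xo :: "'a::metric_space" and x x' :: "nat \<Rightarrow> 'a"
  assumes config: "M_configuration M xo x x'"
begin

lemma config_centre_far:
  assumes "i \<in> {1..M}"
  shows "3/2 < dist xo (x i)" and "3/2 < dist xo (x' i)"
  using config assms unfolding M_configuration_def by auto

lemma config_close:
  assumes "i \<in> {1..M}" "k \<in> {1..M}"
  shows "dist (x i) (x k) \<le> 3/2" and "i \<noteq> k \<Longrightarrow> dist (x i) (x' k) \<le> 3/2"
  using config assms unfolding M_configuration_def
  by (cases "i = k"; fastforce)+

lemma config_matching_far:
  assumes "i \<in> {1..M}"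
  shows "dist xo (x i) < dist (x' i) (x i)"
  using config assms unfolding M_configuration_def by (simp add: dist_commute)

lemma config_hub:
  assumes "j \<in> {1..M}" "S \<subseteq> {1..M}" "k \<in> S" "k \<noteq> j" "w \<in> insert (x' j) (x ` S)"
  shows "dist w (x k) \<le> 3/2"
proof -
  consider "w = x' j" | i where "i \<in> S" "w = x i" using assms(5) by blast
  then show ?thesis
  proof cases
    case 1
    then show ?thesis using config_close(2)[of k j] assms by (auto simp: dist_commute)
  next
    case 2
    then have "i \<in> {1..M}" "k \<in> {1..M}" using assms(2,3) by auto
    then show ?thesis using config_close(1)[of i k] 2 by simp
  qed
qed

lemma config_pairwise_close:
  assumes "j \<in> {1..M}" "S \<subseteq> {1..M}" "j \<notin> S"
    and "u \<in> insert (x' j) (x ` S)" "v \<in> insert (x' j) (x ` S)"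
  shows "dist u v \<le> 3/2"
proof -
  have index: "i \<in> {1..M}" if "i \<in> S" for i
    using that assms(2) by blast
  have partner: "dist (x i) (x' j) \<le> 3/2" if "i \<in> S" for i
  proof -
    have "i \<noteq> j" using that assms(3) by blast
    then show ?thesis using config_close(2)[OF index[OF that] assms(1)] by simp
  qed
  have pair: "dist (x i) (x k) \<le> 3/2" if "i \<in> S" "k \<in> S" for i k
    using config_close(1)[OF index[OF that(1)] index[OF that(2)]] .
  show ?thesis
    using assms(4,5) partner pair by (auto simp: dist_commute)
qed

end

theorem mainTheorem1:
  fixes xo :: "'a::metric_space" and x x' :: "nat \<Rightarrow> 'a"
    and M j :: nat and S :: "nat set"
  assumes "M > 0"
    and "M_configuration M xo x x'"
    and "j \<in> {1..M}"
    and "S \<subseteq> {1..M}"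
    and "card S > 1"
  shows "(\<exists>C. k_clustering 2 C ({xo, x' j} \<union> x ` S) \<and>
              nice_clustering dist C ({xo, x' j} \<union> x ` S))
         \<longleftrightarrow> j \<notin> S"
proof -
  define A where "A = {xo, x' j} \<union> x ` S"
  have far_rest: "\<forall>w\<in>insert (x' j) (x ` S). 3/2 < dist xo w"
    using config_centre_far[OF assms(2)] assms(3,4) by blast
  then have "xo \<notin> insert (x' j) (x ` S)" by fastforce
  then have rest: "A - {xo} = insert (x' j) (x ` S)"
    unfolding A_def by blast
  note far = far_rest[folded rest]
  have "(\<exists>C. k_clustering 2 C A \<and> nice_clustering dist C A) \<longleftrightarrow> j \<notin> S"
  proof
    assume "\<exists>C. k_clustering 2 C A \<and> nice_clustering dist C A"
    then obtain C where C: "k_clustering 2 C A \<and> nice_clustering dist C A" by blast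
    show "j \<notin> S"
    proof
      assume jS: "j \<in> S"
      have "\<not> S \<subseteq> {j}" using assms(5) card_mono[of "{j}" S] by auto
      then obtain k where k: "k \<in> S" "k \<noteq> j" by blast
      have hub: "x k \<in> A - {xo}" "\<forall>w\<in>A - {xo}. dist w (x k) \<le> 3/2"
        using config_hub[OF assms(2,3,4) k] k unfolding rest by auto
      have pair: "x j \<in> A - {xo}" "x' j \<in> A - {xo}" "dist xo (x j) \<le> dist (x' j) (x j)"
        using jS config_matching_far[OF assms(2,3)] unfolding rest by auto
      have "xo \<in> A" unfolding A_def by simp
      from no_nice_two_clustering[OF this far hub pair] C show False by blast
    qed
  next
    assume "j \<notin> S"
    then have close: "\<forall>u\<in>A - {xo}. \<forall>v\<in>A - {xo}. dist u v \<le> 3/2"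
      using config_pairwise_close[OF assms(2,3,4)] unfolding rest by blast
    have "xo \<in> A" "A - {xo} \<noteq> {}" unfolding rest by (simp_all add: A_def)
    from isolated_point_nice_clustering[OF this far close]
    show "\<exists>C. k_clustering 2 C A \<and> nice_clustering dist C A" by blast
  qed
  then show ?thesis unfolding A_def .
qed

end
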